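(* Fix $\theta$ with $1\le\theta\le 2.13$. For $r\in[4.999,5]$ let $q_r(x)=1-(r-\theta)x+(r-2\theta)x^2+\theta x^3$ and let $\gamma(r)$ be the unique root of $q_r$ in the interval $(0,0.56)$. Then $\gamma(r)$ is strictly decreasing in $r$ on $[4.999,5]$, and so is $\frac{1}{1-\gamma(r)}-\theta$.
   Context: For such $r,\theta$, the polynomial $q_r$ has exactly one root in $(0,0.56)$ and one root in $(0.56,1)$, and one root less than $-1$. *)

theory Defs
  imports Complex_Main
begin

definition qpoly :: "real \<Rightarrow> real \<Rightarrow> real \<Rightarrow> real" where
  "qpoly \<theta> r x = 1 - (r - \<theta>) * x + (r - 2 * \<theta>) * x ^ 2 + \<theta> * x ^ 3"

definition gamma :: "real \<Rightarrow> real \<Rightarrow> real" where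
  "gamma \<theta> r = (THE x. x \<in> {0<..<0.56} \<and> qpoly \<theta> r x = 0)"

end

theory Submission
  imports Defs
begin

text \<open>For \<open>x \<ge> 0\<close> and \<open>r > 2\<theta>\<close> the cubic \<open>q\<^sub>r\<close> is strictly convex, so from \<open>q\<^sub>r(0) = 1 > 0\<close>
  and \<open>q\<^sub>r(0.56) < 0\<close> it has exactly one root in \<open>(0, 0.56)\<close>. Moreover
  \<open>\<partial>q\<^sub>r(x)/\<partial>r = -x(1 - x) < 0\<close> on \<open>(0, 1)\<close>: increasing \<open>r\<close> makes \<open>q\<^sub>r(\<gamma>(r)) < 0\<close>, so the new root
  lies to the left of the old one. Finally \<open>x \<mapsto> 1/(1 - x)\<close> is increasing below 1.\<close>

lemma qpoly_at_0 [simp]: "qpoly t r 0 = 1"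
  by (simp add: qpoly_def)

lemma continuous_on_qpoly: "continuous_on S (qpoly t r)"
  unfolding qpoly_def by (intro continuous_intros)

lemma qpoly_second_difference:
  "(c - b) * qpoly t r a + (b - a) * qpoly t r c - (c - a) * qpoly t r b
   = (c - a) * (c - b) * (b - a) * ((r - 2 * t) + t * (a + b + c))"
  unfolding qpoly_def by (simp add: algebra_simps power2_eq_square power3_eq_cube)

lemma qpoly_decreasing_in_r:
  assumes "0 < x" "x < 1" "r1 < r2"
  shows "qpoly t r2 x < qpoly t r1 x"
proof -
  have "qpoly t r2 x = qpoly t r1 x - (r2 - r1) * (x * (1 - x))"
    unfolding qpoly_def by (simp add: algebra_simps power2_eq_square)
  moreover have "(r2 - r1) * (x * (1 - x)) > 0"
    using assms by simp
  ultimately show ?thesis by simp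
qed

lemma qpoly_root_below:
  assumes "0 < y" "qpoly t r y < 0"
  shows "\<exists>x \<in> {0<..<y}. qpoly t r x = 0"
proof -
  obtain x where x: "0 \<le> x" "x \<le> y" "qpoly t r x = 0"
    using IVT2'[of "qpoly t r" y 0 0] continuous_on_qpoly assms by force
  with assms have "x \<noteq> 0" "x \<noteq> y" by auto
  with x show ?thesis by auto
qed

lemma qpoly_root_unique:
  assumes "0 \<le> t" "2 * t < r" "qpoly t r c < 0"
    and "a \<in> {0<..<c}" "b \<in> {0<..<c}" "qpoly t r a = 0" "qpoly t r b = 0"
  shows "a = b"
proof -
  have no_two_roots: False
    if "0 < u" "u < v" "v < c" "qpoly t r u = 0" "qpoly t r v = 0" for u v
  proof -
    have "(c - u) * (c - v) * (v - u) * ((r - 2 * t) + t * (u + v + c)) > 0"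
      using that assms(1,2) by (intro mult_pos_pos add_pos_nonneg) auto
    moreover have "(v - u) * qpoly t r c
        = (c - u) * (c - v) * (v - u) * ((r - 2 * t) + t * (u + v + c))"
      using qpoly_second_difference[of c v t r u] that(4,5) by simp
    ultimately have "(v - u) * qpoly t r c > 0" by linarith
    moreover have "(v - u) * qpoly t r c < 0"
      using \<open>u < v\<close> assms(3) by (simp add: mult_pos_neg)
    ultimately show False by linarith
  qed
  show ?thesis
    using assms(4-7) no_two_roots[of a b] no_two_roots[of b a]
    by (cases a b rule: linorder_cases) auto
qed

lemma qpoly_056_neg:
  assumes "1 \<le> t" "t \<le> 2.13" "4.999 \<le> r" "r \<le> 5"
  shows "qpoly t r 0.56 < 0"
  using assms unfolding qpoly_def by (simp add: power2_eq_square power3_eq_cube field_simps)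

lemma qpoly_unique_root_056:
  assumes "1 \<le> t" "t \<le> 2.13" "4.999 \<le> r" "r \<le> 5"
  shows "\<exists>!x. x \<in> {0<..<0.56} \<and> qpoly t r x = 0"
  using qpoly_root_below[OF _ qpoly_056_neg[OF assms]]
    qpoly_root_unique[OF _ _ qpoly_056_neg[OF assms]] assms
  by auto

lemma gamma_root:
  assumes "1 \<le> t" "t \<le> 2.13" "4.999 \<le> r" "r \<le> 5"
  shows "gamma t r \<in> {0<..<0.56}" "qpoly t r (gamma t r) = 0"
  using theI'[OF qpoly_unique_root_056[OF assms]] unfolding gamma_def by auto

lemma gamma_strict_antimono:
  assumes "1 \<le> t" "t \<le> 2.13"
  shows "strict_antimono_on {4.999..5} (gamma t)"
proof (rule monotone_onI)
  fix r1 r2 :: real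
  assume r1: "r1 \<in> {4.999..5}" and r2: "r2 \<in> {4.999..5}" and "r1 < r2"
  let ?y = "gamma t r1"
  have y: "?y \<in> {0<..<0.56}" "qpoly t r1 ?y = 0"
    using gamma_root[OF assms] r1 by auto
  then have "qpoly t r2 ?y < 0"
    using qpoly_decreasing_in_r[of ?y r1 r2 t] \<open>r1 < r2\<close> by simp
  then obtain x where x: "x \<in> {0<..<?y}" "qpoly t r2 x = 0"
    using qpoly_root_below[of ?y t r2] y by auto
  have "x = gamma t r2"
    using qpoly_root_unique[OF _ _ qpoly_056_neg[OF assms], of r2 x "gamma t r2"]
      gamma_root[OF assms, of r2] x y assms r2 by auto
  with x show "gamma t r2 < gamma t r1" by simp
qed

theorem mainTheorem9:
  fixes \<theta> :: real
  assumes "1 \<le> \<theta>" and "\<theta> \<le> 2.13"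
  shows "(\<forall>r\<in>{4.999..5}. \<exists>!x. x \<in> {0<..<0.56} \<and> qpoly \<theta> r x = 0)
    \<and> strict_antimono_on {4.999..5::real} (gamma \<theta>)
    \<and> strict_antimono_on {4.999..5::real} (\<lambda>r. 1 / (1 - gamma \<theta> r) - \<theta>)"
proof (intro conjI ballI)
  fix r :: real assume "r \<in> {4.999..5}"
  then show "\<exists>!x. x \<in> {0<..<0.56} \<and> qpoly \<theta> r x = 0"
    using qpoly_unique_root_056[OF assms] by simp
next
  show "strict_antimono_on {4.999..5} (gamma \<theta>)"
    using gamma_strict_antimono[OF assms] .
next
  show "strict_antimono_on {4.999..5} (\<lambda>r. 1 / (1 - gamma \<theta> r) - \<theta>)"
  proof (rule monotone_onI)
    fix r1 r2 :: real
    assume "r1 \<in> {4.999..5}" "r2 \<in> {4.999..5}" "r1 < r2"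
    then have "gamma \<theta> r2 < gamma \<theta> r1" "gamma \<theta> r1 < 0.56"
      using monotone_onD[OF gamma_strict_antimono[OF assms]] gamma_root[OF assms]
      by auto
    then show "1 / (1 - gamma \<theta> r2) - \<theta> < 1 / (1 - gamma \<theta> r1) - \<theta>"
      by (simp add: divide_strict_left_mono)
  qed
qed

end
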